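(* Let ${\bf R}=(R_1,\dots,R_d)\in\mathbb R_+^d$, $u=\max\{R_1,\dots,R_d\}$, $v=\min\{R_1,\dots,R_d\}$, and $g({\bf R})=\frac{1}{1/R_1+\cdots+1/R_d}$. Then $v\le d\,g({\bf R})\le u$ and, for all $d\in\mathbb N_+$, $$2^v\sqrt{\frac{1}{e(d+2u)}}\le\big(\mathrm{vol}(B^d_{2{\bf R}})\big)^{g({\bf R})}\le 2^u\Big(\frac{2v+1}{2v}\Big)^{\frac{u}{2v}}\sqrt{\frac{2eu}{d}}.$$
   Context: $B^d_{2{\bf R}}=\{{\bf x}\in\mathbb R^d:\sum_{j=1}^d|x_j|^{2R_j}\le1\}$ and vol is Lebesgue measure; explicitly $\mathrm{vol}(B^d_{2{\bf R}})=2^d\frac{\Gamma(1+\frac{1}{2R_1})\cdots\Gamma(1+\frac{1}{2R_d})}{\Gamma(1+\frac{1}{2R_1}+\cdots+\frac{1}{2R_d})}$. *)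

theory Defs
  imports "HOL-Analysis.Analysis"
begin

text \<open>The generalized unit ball B^d_{2R} in R^d, indexed by a finite type 'n with d = CARD('n).\<close>
definition gen_ball :: "real^'n \<Rightarrow> (real^'n) set" where
  "gen_ball R = {x. (\<Sum>j\<in>UNIV. \<bar>x $ j\<bar> powr (2 * R $ j)) \<le> 1}"

definition gR :: "real^'n \<Rightarrow> real" where
  "gR R = 1 / (\<Sum>j\<in>UNIV. 1 / R $ j)"

end

theory Submission
  imports Defs
begin

text \<open>
  Put \<open>S = (\<Sum>j. 1 / (2 * R $ j))\<close>, so that \<open>gR R = 1 / (2 * S)\<close>. On the ball the indicator
  is at most \<open>exp (l - l * (\<Sum>j. \<bar>x $ j\<bar> powr (2 * R $ j)))\<close>, whose integral factorises into
  one-dimensional Gamma integrals; with \<open>l = S\<close> and the log-convexity bound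
  \<open>Gamma (1 + x) \<le> (1 + x) powr x\<close> this gives \<open>vol \<le> exp S * 2 ^ d * ((1 + 1 / (2 * v)) / S) powr S\<close>.
  Conversely the ball contains the box with half-sides \<open>d powr (- 1 / (2 * R $ j))\<close>, of volume
  \<open>2 ^ d * d powr (- S)\<close>. Raising both bounds to the power \<open>gR R\<close> turns the \<open>S\<close>-th powers into
  square roots, and the harmonic-mean bounds \<open>v \<le> d * gR R \<le> u\<close> give the stated form.
\<close>

lemma nn_integral_exp_neg_powr_Icc_le:
  fixes p l a b :: real
  assumes p: "p > 0" and l: "l > 0" and a: "0 < a"
  shows "(\<integral>\<^sup>+t. ennreal (exp (- l * t powr p)) * indicator {a..b} t \<partial>lborel)
           \<le> Gamma (1 + 1/p) * l powr (- 1/p)"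
proof (cases "a \<le> b")
  case False
  then show ?thesis using p l by (simp add: Gamma_real_pos less_imp_le)
next
  case True
  define C where "C = 1 / (p * l powr (1/p))"
  define f where "f y = C * (y powr (1/p - 1) / exp y)" for y
  define g where "g t = l * t powr p" for t
  define g' where "g' t = l * p * t powr (p - 1)" for t
  have C: "C > 0" using p l by (simp add: C_def)
  have integrand_eq: "f (g t) * g' t = exp (- l * t powr p)" if "t > 0" for t
  proof -
    have "(l * t powr p) powr (1/p - 1) = l powr (1/p - 1) * t powr (1 - p)"
      using that l p by (simp add: powr_mult powr_powr algebra_simps)
    then have "f (g t) * g' t
        = C * p * (l powr (1/p - 1) * l) * (t powr (1 - p) * t powr (p - 1)) / exp (l * t powr p)"
      by (simp add: f_def g_def g'_def)
    also have "l powr (1/p - 1) * l = l powr (1/p)" using l by (simp add: powr_diff)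
    also have "t powr (1 - p) * t powr (p - 1) = 1" using that by (simp add: powr_add [symmetric])
    finally show ?thesis using p l by (simp add: C_def exp_minus field_simps)
  qed
  have "(\<integral>\<^sup>+t. ennreal (exp (- l * t powr p)) * indicator {a..b} t \<partial>lborel)
        = (\<integral>\<^sup>+t. ennreal (f (g t) * g' t * indicator {a..b} t) \<partial>lborel)"
    using a by (intro nn_integral_cong) (auto simp: indicator_def integrand_eq)
  also have "\<dots> = (\<integral>\<^sup>+y. ennreal (f y * indicator {g a..g b} y) \<partial>lborel)"
  proof (rule nn_integral_substitution [symmetric])
    show "set_borel_measurable borel {g a..g b} f"
      unfolding f_def set_borel_measurable_def by measurable
    fix t assume "t \<in> {a..b}"
    then have "t > 0" using a by auto
    then show "(g has_real_derivative g' t) (at t)" "g' t \<ge> 0"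
      using p l unfolding g_def g'_def by (auto intro!: derivative_eq_intros)
  qed (use a True in \<open>auto simp: g'_def intro!: continuous_intros\<close>)
  also have "\<dots> \<le> (\<integral>\<^sup>+y. ennreal C * ennreal (indicator {0..} y * y powr (1/p - 1) / exp y) \<partial>lborel)"
    using C \<open>0 < l\<close> by (intro nn_integral_mono)
      (auto simp: f_def g_def indicator_def ennreal_mult' [symmetric] intro: order_trans [rotated])
  also have "\<dots> = ennreal (C * Gamma (1/p))"
    using p C by (simp add: nn_integral_cmult Gamma_conv_nn_integral_real ennreal_mult)
  also have "C * Gamma (1/p) = Gamma (1 + 1/p) * l powr (- 1/p)"
  proof -
    have "Gamma (1/p + 1) = 1/p * Gamma (1/p)"
      using p by (intro Gamma_plus1) (auto dest: nonpos_Ints_nonpos)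
    then show ?thesis using p l by (simp add: C_def powr_minus field_simps add.commute)
  qed
  finally show ?thesis .
qed

lemma nn_integral_greaterThan_0_le_of_Icc:
  fixes f :: "real \<Rightarrow> ennreal"
  assumes f: "f \<in> borel_measurable borel"
    and bound: "\<And>a b. 0 < a \<Longrightarrow> (\<integral>\<^sup>+t. f t * indicator {a..b} t \<partial>lborel) \<le> B"
  shows "(\<integral>\<^sup>+t. f t * indicator {0<..} t \<partial>lborel) \<le> B"
proof -
  define h where "h i t = f t * indicator {1 / Suc i..Suc i} t" for i :: nat and t
  have "incseq h"
  proof (intro incseq_SucI le_funI)
    fix i t
    have "1 / real (Suc (Suc i)) \<le> 1 / real (Suc i)" by (simp add: frac_le)
    then show "h i t \<le> h (Suc i) t"
      by (auto simp: h_def indicator_def)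
  qed
  have h_measurable: "\<And>i. h i \<in> borel_measurable lborel"
    unfolding h_def using f by measurable
  have "f t * indicator {0<..} t \<le> (SUP i. h i t)" for t
  proof (cases "t > 0")
    case True
    obtain n :: nat where n: "max t (1/t) \<le> real n" using real_arch_simple by blast
    then have "t \<in> {1 / Suc n..Suc n}"
      using True by (auto simp: field_simps)
    then have "h n t = f t * indicator {0<..} t"
      using True by (simp add: h_def)
    then show ?thesis by (metis SUP_upper UNIV_I)
  qed simp
  then have "(\<integral>\<^sup>+t. f t * indicator {0<..} t \<partial>lborel) \<le> (\<integral>\<^sup>+t. (SUP i. h i t) \<partial>lborel)"
    by (intro nn_integral_mono)
  also have "\<dots> = (SUP i. \<integral>\<^sup>+t. h i t \<partial>lborel)"
    by (rule nn_integral_monotone_convergence_SUP [OF \<open>incseq h\<close> h_measurable])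
  also have "\<dots> \<le> B"
    by (intro SUP_least) (simp add: h_def bound)
  finally show ?thesis .
qed

lemma nn_integral_abs_eq:
  fixes f :: "real \<Rightarrow> ennreal"
  assumes f: "f \<in> borel_measurable borel"
  shows "(\<integral>\<^sup>+t. f \<bar>t\<bar> \<partial>lborel) = 2 * (\<integral>\<^sup>+t. f t * indicator {0<..} t \<partial>lborel)"
proof -
  define g where "g t = f t * indicator {0<..} t" for t
  have g: "g \<in> borel_measurable borel" unfolding g_def using f by measurable
  have "(\<integral>\<^sup>+t. f \<bar>t\<bar> \<partial>lborel) = (\<integral>\<^sup>+t. g t + g (0 + -1 * t) \<partial>lborel)"
    by (intro nn_integral_cong_AE AE_I [of _ _ "{0}"]) (auto simp: g_def indicator_def)
  also have "\<dots> = (\<integral>\<^sup>+t. g t \<partial>lborel) + (\<integral>\<^sup>+t. g (0 + -1 * t) \<partial>lborel)"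
    using g by (intro nn_integral_add) auto
  also have "(\<integral>\<^sup>+t. g (0 + -1 * t) \<partial>lborel) = (\<integral>\<^sup>+t. g t \<partial>lborel)"
    using nn_integral_real_affine [OF g, of "-1" 0] by simp
  finally show ?thesis by (simp add: g_def mult_2)
qed

lemma nn_integral_exp_neg_abs_powr_le:
  fixes p l :: real
  assumes p: "p > 0" and l: "l > 0"
  shows "(\<integral>\<^sup>+t. exp (- l * \<bar>t\<bar> powr p) \<partial>lborel) \<le> 2 * Gamma (1 + 1/p) * l powr (- 1/p)"
proof -
  have "(\<integral>\<^sup>+t. exp (- l * \<bar>t\<bar> powr p) \<partial>lborel)
      = 2 * (\<integral>\<^sup>+t. ennreal (exp (- l * t powr p)) * indicator {0<..} t \<partial>lborel)"
    by (rule nn_integral_abs_eq [where f = "\<lambda>t. ennreal (exp (- l * t powr p))"]) measurable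
  also have "\<dots> \<le> 2 * ennreal (Gamma (1 + 1/p) * l powr (- 1/p))"
    using nn_integral_exp_neg_powr_Icc_le [OF p l]
    by (intro mult_left_mono nn_integral_greaterThan_0_le_of_Icc) auto
  also have "\<dots> = 2 * Gamma (1 + 1/p) * l powr (- 1/p)"
    by (metis ennreal_mult' ennreal_numeral mult.assoc zero_le_numeral)
  finally show ?thesis .
qed

lemma Gamma_1_plus_le_powr:
  fixes x :: real
  assumes x: "x > 0"
  shows "Gamma (1 + x) \<le> (1 + x) powr x"
proof -
  define t where "t = x / (1 + x)"
  have t: "0 \<le> t" "t \<le> 1" "(1 - t) *\<^sub>R 1 + t *\<^sub>R (2 + x) = 1 + x"
    using x by (auto simp: t_def field_simps)
  have Gamma_pos: "Gamma (1 + x) > 0" using x by (intro Gamma_real_pos) simp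
  have "1 + x \<notin> \<int>\<^sub>\<le>\<^sub>0" using x by (auto dest: nonpos_Ints_nonpos)
  then have "Gamma (2 + x) = (1 + x) * Gamma (1 + x)"
    using Gamma_plus1 [of "1 + x"] by (simp add: add_ac)
  then have ln_Gamma_2: "ln (Gamma (2 + x)) = ln (1 + x) + ln (Gamma (1 + x))"
    using x Gamma_pos by (simp add: ln_mult_pos)
  \<comment> \<open>log-convexity of \<open>Gamma\<close> on \<open>[1, 2 + x]\<close>, using \<open>Gamma 1 = 1\<close>\<close>
  have "ln (Gamma (1 + x)) \<le> t * ln (Gamma (2 + x))"
    using convex_onD [OF log_convex_Gamma_real t(1,2), of 1 "2 + x"] x unfolding t(3) by simp
  then have "ln (Gamma (1 + x)) \<le> x * ln (1 + x)"
    using x unfolding ln_Gamma_2 by (simp add: t_def field_simps)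
  then have "exp (ln (Gamma (1 + x))) \<le> exp (x * ln (1 + x))"
    by simp
  then show ?thesis
    using x Gamma_pos by (simp add: powr_def mult.commute)
qed

lemma gen_ball_sets [measurable]: "gen_ball R \<in> sets borel"
  unfolding gen_ball_def by measurable

lemma prod_Basis_vec:
  fixes f :: "real^'n \<Rightarrow> 'b::comm_monoid_mult"
  shows "prod f Basis = (\<Prod>j\<in>UNIV. f (axis j 1))"
proof -
  have "inj (\<lambda>j::'n. axis j (1::real))" by (auto intro!: injI simp: axis_eq_axis)
  then show ?thesis by (simp add: Basis_vec_def UNION_singleton_eq_range prod.reindex)
qed

lemma emeasure_gen_ball_le:
  fixes R :: "real^'n" and l :: real
  assumes pos: "\<And>j. R $ j > 0" and l: "l > 0"
  shows "emeasure lborel (gen_ball R)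
           \<le> exp l * (\<Prod>j\<in>UNIV. 2 * Gamma (1 + 1 / (2 * R $ j)) * l powr (- 1 / (2 * R $ j)))"
proof -
  define f where "f b t = ennreal (exp (- l * \<bar>t\<bar> powr (2 * (R \<bullet> b))))" for b :: "real^'n" and t
  have f_measurable [measurable]: "f b \<in> borel_measurable borel" for b
    unfolding f_def by measurable
  have prod_f: "(\<Prod>b\<in>Basis. f b (x \<bullet> b)) = exp (- l * (\<Sum>j\<in>UNIV. \<bar>x $ j\<bar> powr (2 * R $ j)))" for x
    by (simp add: prod_Basis_vec f_def inner_axis prod_ennreal exp_sum [symmetric] sum_distrib_left)
  have "emeasure lborel (gen_ball R) = (\<integral>\<^sup>+x. indicator (gen_ball R) x \<partial>lborel)"
    by simp
  also have "\<dots> \<le> (\<integral>\<^sup>+x. exp l * (\<Prod>b\<in>Basis. f b (x \<bullet> b)) \<partial>lborel)"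
    using l by (intro nn_integral_mono)
      (auto simp: indicator_def gen_ball_def prod_f ennreal_mult' [symmetric] exp_add [symmetric]
            intro!: ennreal_leI mult_left_le)
  also have "\<dots> = exp l * (\<Prod>b\<in>Basis. \<integral>\<^sup>+t. f b t \<partial>lborel)"
    by (simp add: nn_integral_cmult nn_integral_lborel_prod)
  also have "\<dots> = exp l * (\<Prod>j\<in>UNIV. \<integral>\<^sup>+t. exp (- l * \<bar>t\<bar> powr (2 * R $ j)) \<partial>lborel)"
    by (simp add: prod_Basis_vec f_def inner_axis)
  also have "\<dots> \<le> exp l * (\<Prod>j\<in>UNIV. ennreal (2 * Gamma (1 + 1 / (2 * R $ j)) * l powr (- 1 / (2 * R $ j))))"
    using pos l by (intro mult_left_mono prod_mono_ennreal nn_integral_exp_neg_abs_powr_le) auto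
  also have "\<dots> = exp l * (\<Prod>j\<in>UNIV. 2 * Gamma (1 + 1 / (2 * R $ j)) * l powr (- 1 / (2 * R $ j)))"
    using pos l by (subst prod_ennreal)
      (auto simp: ennreal_mult' add_pos_pos intro!: mult_nonneg_nonneg Gamma_real_pos [THEN less_imp_le])
  finally show ?thesis .
qed

lemma gen_ball_fmeasurable:
  fixes R :: "real^'n"
  assumes pos: "\<And>j. R $ j > 0"
  shows "gen_ball R \<in> fmeasurable lborel"
  using emeasure_gen_ball_le [OF pos zero_less_one]
  by (intro fmeasurableI) (auto simp: top_unique [symmetric] intro: le_less_trans)

lemma measure_gen_ball_le:
  fixes R :: "real^'n" and l :: real
  assumes pos: "\<And>j. R $ j > 0" and l: "l > 0"
  shows "measure lborel (gen_ball R)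
           \<le> exp l * (\<Prod>j\<in>UNIV. 2 * Gamma (1 + 1 / (2 * R $ j)) * l powr (- 1 / (2 * R $ j)))"
proof -
  have "0 \<le> (\<Prod>j\<in>UNIV. 2 * Gamma (1 + 1 / (2 * R $ j)) * l powr (- 1 / (2 * R $ j)))"
    using pos by (intro prod_nonneg) (auto simp: add_pos_pos intro!: mult_nonneg_nonneg Gamma_real_pos [THEN less_imp_le])
  then show ?thesis
    using emeasure_gen_ball_le [OF pos l] gen_ball_fmeasurable [OF pos]
    by (simp add: emeasure_eq_measure2 ennreal_le_iff)
qed

lemma prod_le_measure_gen_ball:
  fixes R c :: "real^'n"
  assumes pos: "\<And>j. R $ j > 0" and c: "\<And>j. 0 \<le> c $ j"
    and c_in: "(\<Sum>j\<in>UNIV. c $ j powr (2 * R $ j)) \<le> 1"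
  shows "(\<Prod>j\<in>UNIV. 2 * c $ j) \<le> measure lborel (gen_ball R)"
proof -
  have "cbox (-c) c \<subseteq> gen_ball R"
  proof
    fix y assume "y \<in> cbox (-c) c"
    then have "\<bar>y $ j\<bar> \<le> c $ j" for j
      by (simp add: mem_box_cart abs_le_iff) (metis minus_le_iff)
    then have "(\<Sum>j\<in>UNIV. \<bar>y $ j\<bar> powr (2 * R $ j)) \<le> (\<Sum>j\<in>UNIV. c $ j powr (2 * R $ j))"
      using pos by (intro sum_mono powr_mono2) (auto simp: less_imp_le)
    with c_in show "y \<in> gen_ball R" by (simp add: gen_ball_def)
  qed
  then have "measure lborel (cbox (-c) c) \<le> measure lborel (gen_ball R)"
    using gen_ball_fmeasurable [OF pos] by (intro measure_mono_fmeasurable) auto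
  moreover have "cbox (-c) c \<noteq> {}"
    using c by (simp add: interval_ne_empty_cart)
  ultimately show ?thesis by (simp add: content_cbox_cart)
qed

lemma gR_eq_half_inverse_sum:
  "gR R = 1 / (2 * (\<Sum>j\<in>UNIV. 1 / (2 * R $ j)))"
  by (simp add: gR_def sum_distrib_left)

lemma measure_gen_ball_powr_gR_le:
  fixes R :: "real^'n" and v :: real
  assumes pos: "\<And>j. R $ j > 0" and v: "v > 0" "\<And>j. v \<le> R $ j"
  shows "measure lebesgue (gen_ball R) powr gR R
           \<le> 2 powr (CARD('n) * gR R) * sqrt ((1 + 1 / (2 * v)) * (2 * exp 1 * gR R))"
proof -
  define x where "x j = 1 / (2 * R $ j)" for j
  define S where "S = (\<Sum>j\<in>UNIV. x j)"
  define c where "c = 1 + 1 / (2 * v)"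
  have x: "x j > 0" for j using pos [of j] by (simp add: x_def)
  have S: "S > 0" unfolding S_def using x by (simp add: sum_pos)
  have c: "c \<ge> 1" using v by (simp add: c_def)
  have g: "gR R = 1 / (2 * S)" by (simp add: gR_eq_half_inverse_sum S_def x_def)
  have Gamma_le: "Gamma (1 + x j) \<le> c powr x j" for j
  proof -
    have "Gamma (1 + x j) \<le> (1 + x j) powr x j" by (rule Gamma_1_plus_le_powr [OF x])
    also have "\<dots> \<le> c powr x j"
      using x [of j] v pos [of j] by (intro powr_mono2) (auto simp: c_def x_def frac_le)
    finally show ?thesis .
  qed
  have "measure lebesgue (gen_ball R) \<le> exp S * (\<Prod>j\<in>UNIV. 2 * Gamma (1 + x j) * S powr (- x j))"
    using measure_gen_ball_le [OF pos S] by (simp add: measure_completion x_def)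
  also have "\<dots> \<le> exp S * (\<Prod>j\<in>UNIV. 2 * c powr x j * S powr (- x j))"
    using Gamma_le x by (intro mult_left_mono prod_mono)
      (auto simp: add_pos_pos intro!: mult_right_mono mult_nonneg_nonneg Gamma_real_pos [THEN less_imp_le])
  also have "\<dots> = exp S * (\<Prod>j\<in>UNIV. 2 * (c / S) powr x j)"
    using c S by (simp add: powr_divide powr_minus_divide mult.assoc)
  also have "\<dots> = exp S * 2 powr CARD('n) * (c / S) powr S"
    using c S by (simp add: prod.distrib powr_sum S_def powr_realpow)
  finally have vol_le: "measure lebesgue (gen_ball R) \<le> exp S * 2 powr CARD('n) * (c / S) powr S" .
  have "measure lebesgue (gen_ball R) powr gR R \<le> (exp S * 2 powr CARD('n) * (c / S) powr S) powr gR R"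
    using vol_le g S by (intro powr_mono2) auto
  also have "\<dots> = exp (S * gR R) * 2 powr (CARD('n) * gR R) * (c / S) powr (S * gR R)"
    using c S by (simp add: powr_mult powr_powr exp_powr_real)
  also have "\<dots> = exp 1 powr (1/2) * 2 powr (CARD('n) * gR R) * (c / S) powr (1/2)"
    using S by (simp add: g exp_powr_real)
  also have "\<dots> = 2 powr (CARD('n) * gR R) * sqrt (c * (2 * exp 1 * gR R))"
    using c S by (simp add: powr_half_sqrt g real_sqrt_mult [symmetric] field_simps)
  finally show ?thesis by (simp add: c_def)
qed

lemma measure_gen_ball_powr_gR_ge:
  fixes R :: "real^'n"
  assumes pos: "\<And>j. R $ j > 0"
  shows "2 powr (CARD('n) * gR R) / sqrt CARD('n) \<le> measure lebesgue (gen_ball R) powr gR R"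
proof -
  define d where "d = real CARD('n)"
  define x where "x j = 1 / (2 * R $ j)" for j
  define S where "S = (\<Sum>j\<in>UNIV. x j)"
  have d: "d \<ge> 1" by (simp add: d_def)
  have x: "x j > 0" for j using pos [of j] by (simp add: x_def)
  have S: "S > 0" unfolding S_def using x by (simp add: sum_pos)
  have g: "gR R = 1 / (2 * S)" by (simp add: gR_eq_half_inverse_sum S_def x_def)
  define c :: "real^'n" where "c = (\<chi> j. d powr (- x j))"
  have "c $ j powr (2 * R $ j) = 1 / d" for j
    using d pos [of j] by (simp add: c_def x_def powr_powr powr_neg_one)
  then have "(\<Prod>j\<in>UNIV. 2 * c $ j) \<le> measure lborel (gen_ball R)"
    using d by (intro prod_le_measure_gen_ball pos) (auto simp: c_def d_def)
  moreover have "(\<Prod>j\<in>UNIV. 2 * c $ j) = 2 powr d * d powr (- S)"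
    using d by (simp add: c_def prod.distrib powr_sum [symmetric] S_def sum_negf d_def powr_realpow)
  ultimately have vol_ge: "2 powr d * d powr (- S) \<le> measure lebesgue (gen_ball R)"
    by (simp add: measure_completion)
  have "2 powr (d * gR R) / sqrt d = 2 powr (d * gR R) * d powr (- S * gR R)"
    using d S by (simp add: g powr_minus_divide powr_half_sqrt)
  also have "\<dots> = (2 powr d * d powr (- S)) powr gR R"
    using d by (simp add: powr_mult powr_powr)
  also have "\<dots> \<le> measure lebesgue (gen_ball R) powr gR R"
    using vol_ge S g by (intro powr_mono2) auto
  finally show ?thesis by (simp add: d_def)
qed

lemma gR_bounds:
  fixes R :: "real^'n"
  assumes a: "a > 0" "\<And>j. a \<le> R $ j" and b: "\<And>j. R $ j \<le> b"
  shows "a \<le> CARD('n) * gR R" and "CARD('n) * gR R \<le> b"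
proof -
  have R: "R $ j > 0" for j using a(1) a(2) [of j] by simp
  have "1 / b \<le> 1 / R $ j" "1 / R $ j \<le> 1 / a" for j
    using R [of j] a b [of j] by (auto intro: frac_le)
  then have "CARD('n) / b \<le> (\<Sum>j\<in>UNIV. 1 / R $ j)" "(\<Sum>j\<in>UNIV. 1 / R $ j) \<le> CARD('n) / a"
    using sum_bounded_below [where A = UNIV and K = "1 / b" and f = "\<lambda>j. 1 / R $ j"]
      sum_bounded_above [where A = UNIV and K = "1 / a" and f = "\<lambda>j. 1 / R $ j"] by auto
  moreover have "(\<Sum>j\<in>UNIV. 1 / R $ j) > 0" using R by (simp add: sum_pos)
  moreover have "b > 0" using R [of undefined] b [of undefined] by simp
  ultimately show "a \<le> CARD('n) * gR R" "CARD('n) * gR R \<le> b"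
    using a(1) by (auto simp: gR_def field_simps)
qed

lemma measure_gen_ball_powr_gR_ge_minmax:
  fixes R :: "real^'n" and u v :: real
  assumes pos: "\<And>j. R $ j > 0" and v: "v > 0" "\<And>j. v \<le> R $ j" and u: "\<And>j. R $ j \<le> u"
  shows "2 powr v * sqrt (1 / (exp 1 * (real CARD('n) + 2 * u)))
           \<le> measure lebesgue (gen_ball R) powr gR R"
proof -
  define d where "d = real CARD('n)"
  have d: "d \<ge> 1" by (simp add: d_def)
  have "u > 0" using v u order.trans by fastforce
  have "d \<le> 1 * (d + 2 * u)" using \<open>u > 0\<close> by simp
  also have "\<dots> \<le> exp 1 * (d + 2 * u)" using d \<open>u > 0\<close> by (intro mult_right_mono) auto
  finally have "1 / (exp 1 * (d + 2 * u)) \<le> 1 / d"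
    using d by (intro divide_left_mono) auto
  then have "sqrt (1 / (exp 1 * (d + 2 * u))) \<le> sqrt (1 / d)"
    by (rule real_sqrt_le_mono)
  moreover have "2 powr v \<le> 2 powr (d * gR R)"
    using gR_bounds (1) [OF v u] by (simp add: d_def)
  ultimately have "2 powr v * sqrt (1 / (exp 1 * (d + 2 * u))) \<le> 2 powr (d * gR R) * sqrt (1 / d)"
    using d \<open>u > 0\<close> by (intro mult_mono) auto
  also have "\<dots> \<le> measure lebesgue (gen_ball R) powr gR R"
    using measure_gen_ball_powr_gR_ge [OF pos] by (simp add: d_def real_sqrt_divide)
  finally show ?thesis by (simp add: d_def)
qed

lemma measure_gen_ball_powr_gR_le_minmax:
  fixes R :: "real^'n" and u v :: real
  assumes pos: "\<And>j. R $ j > 0" and v: "v > 0" "\<And>j. v \<le> R $ j" and u: "\<And>j. R $ j \<le> u"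
  shows "measure lebesgue (gen_ball R) powr gR R
           \<le> 2 powr u * ((2 * v + 1) / (2 * v)) powr (u / (2 * v)) * sqrt (2 * exp 1 * u / CARD('n))"
proof -
  define d where "d = real CARD('n)"
  define g where "g = gR R"
  define c where "c = 1 + 1 / (2 * v)"
  have d: "d \<ge> 1" by (simp add: d_def)
  have dg: "v \<le> d * g" "d * g \<le> u"
    using gR_bounds [OF v u] by (simp_all add: d_def g_def)
  have c: "c \<ge> 1" using v by (simp add: c_def)
  have "sqrt c = c powr (1/2)" using c by (simp add: powr_half_sqrt)
  also have "\<dots> \<le> c powr (u / (2 * v))"
    using c v dg by (intro powr_mono) (auto simp: field_simps)
  finally have sqrt_c: "sqrt c \<le> c powr (u / (2 * v))" .
  have "g \<le> u / d" using dg(2) d by (simp add: field_simps)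
  then have "sqrt (2 * exp 1 * g) \<le> sqrt (2 * exp 1 * (u / d))"
    by (intro real_sqrt_le_mono mult_left_mono) auto
  then have sqrt_g: "sqrt (2 * exp 1 * g) \<le> sqrt (2 * exp 1 * u / d)"
    by simp
  have "0 < d * g" using dg(1) v by linarith
  then have "g \<ge> 0" using d by (simp add: zero_less_mult_iff)
  have "measure lebesgue (gen_ball R) powr g \<le> 2 powr (d * g) * (sqrt c * sqrt (2 * exp 1 * g))"
    using measure_gen_ball_powr_gR_le [OF pos v] by (simp add: c_def d_def g_def real_sqrt_mult)
  also have "\<dots> \<le> 2 powr u * (c powr (u / (2 * v)) * sqrt (2 * exp 1 * u / d))"
    using dg(2) c \<open>g \<ge> 0\<close> sqrt_c sqrt_g
    by (intro mult_mono mult_nonneg_nonneg) auto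
  finally show ?thesis
    using v by (simp add: c_def d_def g_def field_simps)
qed

theorem lemma3p4:
  fixes R :: "real^'n"
  assumes pos: "\<And>j. R $ j > 0"
  defines "u \<equiv> Max (range (\<lambda>j. R $ j))"
      and "v \<equiv> Min (range (\<lambda>j. R $ j))"
      and "d \<equiv> real CARD('n)"
  shows "v \<le> d * gR R \<and> d * gR R \<le> u \<and>
         2 powr v * sqrt (1 / (exp 1 * (d + 2 * u)))
           \<le> measure lebesgue (gen_ball R) powr gR R \<and>
         measure lebesgue (gen_ball R) powr gR R
           \<le> 2 powr u * ((2 * v + 1) / (2 * v)) powr (u / (2 * v)) * sqrt (2 * exp 1 * u / d)"
proof -
  have v_le: "v \<le> R $ j" and le_u: "R $ j \<le> u" for j
    by (simp_all add: u_def v_def)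
  have v: "v > 0" using pos Min_in [of "range (\<lambda>j. R $ j)"] by (auto simp: v_def)
  show ?thesis
    unfolding d_def
    using gR_bounds [OF v v_le le_u]
      measure_gen_ball_powr_gR_ge_minmax [OF pos v v_le le_u]
      measure_gen_ball_powr_gR_le_minmax [OF pos v v_le le_u]
    by blast
qed

end
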